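(* Let $\alpha\in\mathcal{O}_K$ be such that $\alpha^2$ is (additively) indecomposable. Then there is $j\geq-1$ such that $\alpha\in\{\pm\alpha_j,\pm\alpha_j'\}$.
   Context: $D>1$ squarefree, $K=\mathbb{Q}(\sqrt D)$, $\mathcal{O}_K$ its ring of integers, $\alpha'$ the conjugate. A totally positive $\beta\in\mathcal{O}_K$ (i.e. $\beta>0,\beta'>0$) is indecomposable if it cannot be written as $\beta=\gamma+\delta$ with $\gamma,\delta\in\mathcal{O}_K$ totally positive. $\omega_D=\sqrt D$ if $D\equiv2,3\pmod4$, $\omega_D=\frac{1+\sqrt D}2$ if $D\equiv1\pmod4$, with continued fraction $[u_0;u_1,u_2,\dots]$; $p_{-1}=1,q_{-1}=0,p_0=u_0,q_0=1$, $p_{i+1}=u_{i+1}p_i+p_{i-1}$, $q_{i+1}=u_{i+1}q_i+q_{i-1}$, and $\alpha_j=p_j-q_j\omega_D'$. *)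

theory Defs
  imports Complex_Main "HOL-Computational_Algebra.Squarefree"
begin

text \<open>K = Q(sqrt D) is viewed as a subfield of the reals (sqrt D > 0).\<close>

definition omega :: "int \<Rightarrow> real" where
  "omega D = (if D mod 4 = 1 then (1 + sqrt (real_of_int D)) / 2 else sqrt (real_of_int D))"

definition omega_conj :: "int \<Rightarrow> real" where
  "omega_conj D = (if D mod 4 = 1 then (1 - sqrt (real_of_int D)) / 2 else - sqrt (real_of_int D))"

definition OK :: "int \<Rightarrow> real set" where
  "OK D = {of_int a + of_int b * omega D | a b. True}"

text \<open>Galois conjugate of an element of O_K (well defined since omega_D is irrational).\<close>
definition galois_conj :: "int \<Rightarrow> real \<Rightarrow> real" where
  "galois_conj D x = (THE y. \<exists>a b::int. x = of_int a + of_int b * omega D \<and> y = of_int a + of_int b * omega_conj D)"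

definition totally_positive :: "int \<Rightarrow> real \<Rightarrow> bool" where
  "totally_positive D x \<longleftrightarrow> x \<in> OK D \<and> x > 0 \<and> galois_conj D x > 0"

definition indecomposable :: "int \<Rightarrow> real \<Rightarrow> bool" where
  "indecomposable D b \<longleftrightarrow> totally_positive D b \<and>
     \<not> (\<exists>g d. totally_positive D g \<and> totally_positive D d \<and> b = g + d)"

fun cf_rem :: "real \<Rightarrow> nat \<Rightarrow> real" where
  "cf_rem x 0 = x"
| "cf_rem x (Suc n) = 1 / frac (cf_rem x n)"

definition cf_u :: "real \<Rightarrow> nat \<Rightarrow> int" where
  "cf_u x n = \<lfloor>cf_rem x n\<rfloor>"

text \<open>Shifted convergents: cf_P x n = p_(n-1), cf_Q x n = q_(n-1).\<close>
fun cf_P :: "real \<Rightarrow> nat \<Rightarrow> int" where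
  "cf_P x 0 = 1"
| "cf_P x (Suc 0) = cf_u x 0"
| "cf_P x (Suc (Suc n)) = cf_u x (Suc n) * cf_P x (Suc n) + cf_P x n"

fun cf_Q :: "real \<Rightarrow> nat \<Rightarrow> int" where
  "cf_Q x 0 = 0"
| "cf_Q x (Suc 0) = 1"
| "cf_Q x (Suc (Suc n)) = cf_u x (Suc n) * cf_Q x (Suc n) + cf_Q x n"

definition p :: "int \<Rightarrow> int \<Rightarrow> int" where
  "p D j = cf_P (omega D) (nat (j + 1))"

definition q :: "int \<Rightarrow> int \<Rightarrow> int" where
  "q D j = cf_Q (omega D) (nat (j + 1))"

definition alpha :: "int \<Rightarrow> int \<Rightarrow> real" where
  "alpha D j = of_int (p D j) - of_int (q D j) * omega_conj D"

end

theory Submission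
  imports Defs
begin

text \<open>If \<alpha>^2 is indecomposable, then \<alpha> is a relative minimum of O_K embedded in the plane
  by \<mu> \<mapsto> (\<mu>, \<mu>'): a nonzero \<mu> with |\<mu>| < |\<alpha>| and |\<mu>'| < |\<alpha>'| would split \<alpha>^2 into the
  totally positive summands \<mu>^2 and \<alpha>^2 - \<mu>^2. After replacing \<alpha> by \<plusminus>\<alpha> or \<plusminus>\<alpha>' we may
  assume |\<alpha>'| < \<alpha>. The numbers alpha_k increase from 1 to infinity, so
  alpha_k \<le> \<alpha> < alpha_(k+1) for some k. If alpha_k < \<alpha>, write \<alpha> = a alpha_k + b alpha_(k+1) with
  integers a, b (consecutive convergents form a unimodular basis); then a and b have opposite
  signs while the conjugates of alpha_k and alpha_(k+1) have opposite signs too, so the conjugate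
  of \<alpha> exceeds that of alpha_k in absolute value, and alpha_k contradicts minimality.
  Hence \<alpha> = alpha_k.\<close>

lemma sqrt_squarefree_irrational:
  fixes D :: int
  assumes "D > 1" "squarefree D"
  shows "sqrt (real_of_int D) \<notin> \<rat>"
proof
  assume "sqrt (real_of_int D) \<in> \<rat>"
  then obtain m n :: nat where n: "n \<noteq> 0" and sq: "\<bar>sqrt (real_of_int D)\<bar> = m / n"
    and cop: "coprime m n"
    by (rule Rats_abs_nat_div_natE)
  have "real m = sqrt (real_of_int D) * n" using n sq assms(1) by (simp add: field_simps)
  then have "(real m)^2 = real_of_int D * (real n)^2" using assms(1) by (simp add: power_mult_distrib)
  then have eq: "int m ^ 2 = D * int n ^ 2"
    by (metis of_int_eq_iff of_int_mult of_int_of_nat_eq of_int_power)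
  have "int n ^ 2 dvd int m ^ 2" using eq by simp
  moreover have "coprime (int n ^ 2) (int m ^ 2)" using cop by (simp add: coprime_commute)
  ultimately have "is_unit (int n ^ 2)"
    by (metis coprime_common_divisor dvd_refl)
  then have "n = 1" by (simp add: power2_eq_1_iff)
  then have "int m ^ 2 = D" using eq by simp
  then have "int m dvd 1" using assms(2) squarefreeD by (metis dvd_refl)
  then show False using \<open>int m ^ 2 = D\<close> assms(1) by simp
qed

lemma of_int_sub_mult_irrational_eq_0_iff:
  fixes z :: real
  assumes "z \<notin> \<rat>"
  shows "of_int u - of_int v * z = 0 \<longleftrightarrow> u = 0 \<and> v = 0"
proof
  assume eq: "of_int u - of_int v * z = 0"
  have "v = 0"
  proof (rule ccontr)
    assume "v \<noteq> 0"
    then have "z = of_int u / of_int v" using eq by (simp add: field_simps)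
    then show False using assms by simp
  qed
  then show "u = 0 \<and> v = 0" using eq by simp
qed simp

lemma cf_rem_irrational:
  assumes "w \<notin> \<rat>"
  shows "cf_rem w k \<notin> \<rat>"
proof (induction k)
  case (Suc k)
  show ?case
  proof
    assume "cf_rem w (Suc k) \<in> \<rat>"
    then have "frac (cf_rem w k) \<in> \<rat>"
      by (metis Rats_inverse cf_rem.simps(2) inverse_eq_divide inverse_inverse_eq)
    then have "frac (cf_rem w k) + of_int \<lfloor>cf_rem w k\<rfloor> \<in> \<rat>" by simp
    then show False using Suc by (simp add: frac_def)
  qed
qed (use assms in simp)

lemma frac_cf_rem_pos:
  assumes "w \<notin> \<rat>"
  shows "frac (cf_rem w k) > 0"
proof -
  have "cf_rem w k \<notin> \<int>" using cf_rem_irrational[OF assms] Ints_subset_Rats by blast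
  then show ?thesis using frac_ge_0 frac_eq_0_iff by (metis order_le_less)
qed

lemma cf_u_Suc_ge_1:
  assumes "w \<notin> \<rat>"
  shows "cf_u w (Suc k) \<ge> 1"
proof -
  have "cf_rem w (Suc k) > 1"
    using frac_cf_rem_pos[OF assms, of k] frac_lt_1[of "cf_rem w k"] by (simp add: less_divide_eq)
  then show ?thesis unfolding cf_u_def by linarith
qed

lemma cf_P_Q_det: "\<bar>cf_P w (Suc k) * cf_Q w k - cf_P w k * cf_Q w (Suc k)\<bar> = 1"
proof (induction k)
  case (Suc k)
  have "cf_P w (Suc (Suc k)) * cf_Q w (Suc k) - cf_P w (Suc k) * cf_Q w (Suc (Suc k))
     = - (cf_P w (Suc k) * cf_Q w k - cf_P w k * cf_Q w (Suc k))"
    by (simp add: algebra_simps)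
  then show ?case using Suc by simp
qed simp

text \<open>With \<omega> = omega D and \<omega>' = omega_conj D, cf_val \<omega> \<omega>' (j + 1) is alpha_j and
  cf_val \<omega> \<omega> (j + 1) = p_j - q_j \<omega> is its conjugate.\<close>
definition cf_val :: "real \<Rightarrow> real \<Rightarrow> nat \<Rightarrow> real" where
  "cf_val w z k = of_int (cf_P w k) - of_int (cf_Q w k) * z"

lemma cf_val_0 [simp]: "cf_val w z 0 = 1"
  by (simp add: cf_val_def)

lemma cf_val_Suc_Suc:
  "cf_val w z (Suc (Suc k)) = of_int (cf_u w (Suc k)) * cf_val w z (Suc k) + cf_val w z k"
  by (simp add: cf_val_def algebra_simps)

lemma cf_val_self_Suc:
  assumes "w \<notin> \<rat>"
  shows "cf_val w w (Suc k) = - frac (cf_rem w k) * cf_val w w k"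
proof (induction k)
  case 0
  then show ?case by (simp add: cf_val_def cf_u_def frac_def)
next
  case (Suc k)
  have "cf_val w w k = - cf_rem w (Suc k) * cf_val w w (Suc k)"
    using Suc frac_cf_rem_pos[OF assms, of k] by (simp add: field_simps)
  then have "cf_val w w (Suc (Suc k)) = (of_int (cf_u w (Suc k)) - cf_rem w (Suc k)) * cf_val w w (Suc k)"
    by (simp add: cf_val_Suc_Suc algebra_simps)
  then show ?case by (simp add: cf_u_def frac_def)
qed

lemma cf_val_self_nonzero:
  assumes "w \<notin> \<rat>"
  shows "cf_val w w k \<noteq> 0"
proof (induction k)
  case (Suc k)
  then show ?case using frac_cf_rem_pos[OF assms, of k] by (simp add: cf_val_self_Suc[OF assms])
qed simp

lemma cf_val_self_alternates:
  assumes "w \<notin> \<rat>"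
  shows "cf_val w w k * cf_val w w (Suc k) < 0"
proof -
  have "cf_val w w k * cf_val w w (Suc k) = - frac (cf_rem w k) * (cf_val w w k)^2"
    using cf_val_self_Suc[OF assms] by (simp add: power2_eq_square)
  moreover have "(cf_val w w k)^2 > 0" using cf_val_self_nonzero[OF assms] by simp
  ultimately show ?thesis using frac_cf_rem_pos[OF assms, of k] by (simp add: mult_pos_pos)
qed

lemma cf_val_conj_growth:
  assumes "w \<notin> \<rat>" "w > 1" "w' < 0"
  shows "1 \<le> cf_val w w' k \<and> cf_val w w' k < cf_val w w' (Suc k) \<and> real k \<le> cf_val w w' (Suc k)"
proof (induction k)
  case 0
  have "cf_u w 0 \<ge> 1" using assms(2) by (simp add: cf_u_def)
  then show ?case using assms(3) by (simp add: cf_val_def)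
next
  case (Suc k)
  have "real_of_int (cf_u w (Suc k)) \<ge> 1" using cf_u_Suc_ge_1[OF assms(1)] by simp
  then have "of_int (cf_u w (Suc k)) * cf_val w w' (Suc k) \<ge> cf_val w w' (Suc k)"
    using Suc by (simp add: mult_le_cancel_right1)
  then have "cf_val w w' (Suc (Suc k)) \<ge> cf_val w w' (Suc k) + cf_val w w' k"
    by (simp add: cf_val_Suc_Suc)
  then show ?case using Suc by auto
qed

lemma cf_val_conj_bracket:
  assumes "w \<notin> \<rat>" "w > 1" "w' < 0" "A \<ge> 1"
  obtains k where "cf_val w w' k \<le> A" "A < cf_val w w' (Suc k)"
proof -
  have "A < cf_val w w' n \<Longrightarrow> \<exists>k. cf_val w w' k \<le> A \<and> A < cf_val w w' (Suc k)" for n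
  proof (induction n)
    case (Suc n)
    then show ?case by (cases "A < cf_val w w' n") (auto simp: not_less)
  qed (use assms(4) in simp)
  moreover obtain n :: nat where "A < real n" using reals_Archimedean2 by blast
  then have "A < cf_val w w' (Suc n)" using cf_val_conj_growth[OF assms(1-3), of n] by linarith
  ultimately show ?thesis using that by blast
qed

lemma unimodular_combination:
  fixes P0 Q0 P1 Q1 x y :: int
  assumes "\<bar>P1 * Q0 - P0 * Q1\<bar> = 1"
  obtains a b where "x = a * P0 + b * P1" "y = a * Q0 + b * Q1"
proof -
  define d where "d = P1 * Q0 - P0 * Q1"
  have "\<bar>d\<bar> = 1" using assms by (simp add: d_def)
  then have "d * d = 1" by (metis abs_mult_self_eq mult_1)
  moreover have "(- d * (x * Q1 - y * P1)) * P0 + (d * (x * Q0 - y * P0)) * P1 = d * d * x"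
    and "(- d * (x * Q1 - y * P1)) * Q0 + (d * (x * Q0 - y * P0)) * Q1 = d * d * y"
    by (simp_all add: d_def algebra_simps)
  ultimately show ?thesis
    using that[of "- d * (x * Q1 - y * P1)" "d * (x * Q0 - y * P0)"] by simp
qed

lemma coefficients_between_consecutive:
  fixes a b :: int and e0 e1 :: real
  assumes "1 \<le> e0" "e0 < e1" "e0 < a * e0 + b * e1" "a * e0 + b * e1 < e1"
  shows "(b = 0 \<and> a > 1) \<or> a * b < 0"
proof (cases b "0::int" rule: linorder_cases)
  case less
  then have "of_int b * e1 \<le> -1 * e1" using assms(1,2) by (intro mult_right_mono) simp_all
  then have "of_int a * e0 > 0" using assms by linarith
  then have "a > 0" using assms(1) by (simp add: zero_less_mult_iff)
  then show ?thesis using less by (simp add: mult_pos_neg)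
next
  case equal
  then have "(of_int a - 1) * e0 > 0" using assms(3) by (simp add: algebra_simps)
  then show ?thesis using equal assms(1) by (simp add: zero_less_mult_iff)
next
  case greater
  then have "of_int b * e1 \<ge> e1" using assms(1,2) by (simp add: mult_le_cancel_right1)
  then have "of_int a * e0 < 0" using assms(4) by linarith
  then have "a < 0" using assms(1) by (simp add: mult_less_0_iff)
  then show ?thesis using greater by (simp add: mult_neg_pos)
qed

lemma abs_combination_of_alternating_gt:
  fixes a b :: int and d0 d1 :: real
  assumes "d0 * d1 < 0" and "(b = 0 \<and> a > 1) \<or> a * b < 0"
  shows "\<bar>d0\<bar> < \<bar>of_int a * d0 + of_int b * d1\<bar>"
  using assms(2)
proof
  assume "b = 0 \<and> a > 1"
  moreover have "d0 \<noteq> 0" using assms(1) by auto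
  ultimately show ?thesis by (simp add: abs_mult)
next
  assume ab: "a * b < 0"
  have "(of_int a * d0) * (of_int b * d1) = of_int (a * b) * (d0 * d1)" by simp
  also have "\<dots> > 0"
  proof (rule mult_neg_neg)
    show "real_of_int (a * b) < 0" using ab by (simp only: of_int_less_0_iff)
  qed (rule assms(1))
  finally have same_sign: "(of_int a * d0) * (of_int b * d1) > 0" .
  have "\<bar>p + q\<bar> = \<bar>p\<bar> + \<bar>q\<bar>" if "p * q > 0" for p q :: real
    using that by (cases "p > 0"; cases "q > 0") (auto simp: zero_less_mult_iff)
  from this[OF same_sign]
  have "\<bar>of_int a * d0 + of_int b * d1\<bar> = \<bar>of_int a * d0\<bar> + \<bar>of_int b * d1\<bar>" .
  moreover have "\<bar>real_of_int a\<bar> * \<bar>d0\<bar> \<ge> \<bar>d0\<bar>"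
  proof -
    have "a \<noteq> 0" using ab by auto
    then have "\<bar>real_of_int a\<bar> \<ge> 1" by linarith
    then show ?thesis by (simp add: mult_le_cancel_right1)
  qed
  moreover have "\<bar>of_int b * d1\<bar> > 0" using ab assms(1) by auto
  ultimately show ?thesis by (simp add: abs_mult)
qed

text \<open>The pair (A, C) stands for (\<alpha>, \<alpha>'): the elements of O_K are u - v \<omega>' with conjugates
  u - v \<omega>, and rel_min says that no nonzero element is smaller than \<alpha> in both embeddings.\<close>
definition rel_min :: "real \<Rightarrow> real \<Rightarrow> real \<Rightarrow> real \<Rightarrow> bool" where
  "rel_min w w' A C \<longleftrightarrow> (\<forall>u v :: int. (u, v) \<noteq> (0, 0) \<longrightarrow>
     \<not> (\<bar>of_int u - of_int v * w'\<bar> < \<bar>A\<bar> \<and> \<bar>of_int u - of_int v * w\<bar> < \<bar>C\<bar>))"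

lemma rel_min_uminus [simp]: "rel_min w w' (- A) (- C) = rel_min w w' A C"
  by (simp add: rel_min_def)

locale quadratic_conjugates =
  fixes w w' :: real
  assumes add_Ints: "w + w' \<in> \<int>" and mult_Ints: "w * w' \<in> \<int>"
    and irrational: "w \<notin> \<rat>" and gt_1: "w > 1" and conj_neg: "w' < 0"
begin

lemma conj_eq:
  obtains t where "w' = of_int t - w"
proof -
  obtain t where "w + w' = of_int t" using add_Ints by (rule Ints_cases)
  then show ?thesis using that[of t] by simp
qed

lemma conj_irrational: "w' \<notin> \<rat>"
proof
  assume "w' \<in> \<rat>"
  obtain t where "w' = of_int t - w" using conj_eq .
  then have "w = of_int t - w'" by simp
  then show False using \<open>w' \<in> \<rat>\<close> irrational by simp
qed

lemma lattice_nonzero: "(x, y) \<noteq> (0, 0) \<Longrightarrow> of_int x - of_int y * w \<noteq> 0"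
  and lattice_conj_nonzero: "(x, y) \<noteq> (0, 0) \<Longrightarrow> of_int x - of_int y * w' \<noteq> 0"
  using of_int_sub_mult_irrational_eq_0_iff[OF irrational]
    of_int_sub_mult_irrational_eq_0_iff[OF conj_irrational] by auto

lemma lattice_norm_abs_ge_1:
  assumes "(x, y) \<noteq> (0, 0)"
  shows "1 \<le> \<bar>(of_int x - of_int y * w') * (of_int x - of_int y * w)\<bar>"
proof (rule Ints_nonzero_abs_ge1)
  have "(of_int x - of_int y * w') * (of_int x - of_int y * w)
      = of_int (x * x) - of_int (x * y) * (w + w') + of_int (y * y) * (w * w')"
    by (simp add: algebra_simps)
  then show "(of_int x - of_int y * w') * (of_int x - of_int y * w) \<in> \<int>"
    using add_Ints mult_Ints by simp
  show "(of_int x - of_int y * w') * (of_int x - of_int y * w) \<noteq> 0"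
    using lattice_nonzero lattice_conj_nonzero assms by simp
qed

lemma lattice_swap:
  obtains x' y' where "of_int x' - of_int y' * w' = of_int x - of_int y * w"
    and "of_int x' - of_int y' * w = of_int x - of_int y * w'"
proof -
  obtain t where t: "w' = of_int t - w" using conj_eq .
  show ?thesis by (rule that[of "x - y * t" "- y"]) (simp_all add: t algebra_simps)
qed

lemma rel_min_swap:
  assumes "rel_min w w' A C"
  shows "rel_min w w' C A"
  unfolding rel_min_def
proof (intro allI impI notI)
  fix u v :: int
  assume "(u, v) \<noteq> (0, 0)"
    and less: "\<bar>of_int u - of_int v * w'\<bar> < \<bar>C\<bar> \<and> \<bar>of_int u - of_int v * w\<bar> < \<bar>A\<bar>"
  obtain u' v' where u': "of_int u' - of_int v' * w' = of_int u - of_int v * w"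
    and v': "of_int u' - of_int v' * w = of_int u - of_int v * w'"
    using lattice_swap .
  have "(u', v') \<noteq> (0, 0)" using u' lattice_nonzero[OF \<open>(u, v) \<noteq> (0, 0)\<close>] by auto
  then have "\<not> (\<bar>of_int u' - of_int v' * w'\<bar> < \<bar>A\<bar> \<and> \<bar>of_int u' - of_int v' * w\<bar> < \<bar>C\<bar>)"
    using assms unfolding rel_min_def by blast
  then show False using less u' v' by simp
qed

lemma lattice_mult:
  obtains X Y where "(of_int x - of_int y * w') * (of_int u - of_int v * w') = of_int X - of_int Y * w'"
    and "(of_int x - of_int y * w) * (of_int u - of_int v * w) = of_int X - of_int Y * w"
proof -
  obtain t where t: "w' = of_int t - w" using conj_eq .
  obtain n where n: "w * w' = of_int n" using mult_Ints by (rule Ints_cases)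
  have mult_eq: "(of_int x - of_int y * z) * (of_int u - of_int v * z)
      = of_int (x * u - y * v * n) - of_int (x * v + y * u - y * v * t) * z"
    if "z * z = of_int t * z - of_int n" for z :: real
  proof -
    have "(of_int x - of_int y * z) * (of_int u - of_int v * z)
        = of_int x * of_int u - (of_int x * of_int v + of_int y * of_int u) * z + of_int y * of_int v * (z * z)"
      by (simp add: algebra_simps)
    then show ?thesis unfolding that by (simp add: algebra_simps)
  qed
  have "w * w = of_int t * w - of_int n" "w' * w' = of_int t * w' - of_int n"
    unfolding n[symmetric] t by (simp_all add: algebra_simps)
  then show ?thesis using that[OF mult_eq mult_eq] by blast
qed

lemma rel_min_convergent:
  assumes min: "rel_min w w' (of_int x - of_int y * w') (of_int x - of_int y * w)"
    and pos: "0 < of_int x - of_int y * w'"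
    and less: "\<bar>of_int x - of_int y * w\<bar> < of_int x - of_int y * w'"
  shows "\<exists>k. x = cf_P w k \<and> y = cf_Q w k"
proof -
  define A where "A = of_int x - of_int y * w'"
  define C where "C = of_int x - of_int y * w"
  have "(x, y) \<noteq> (0, 0)" using pos by auto
  then have "1 \<le> \<bar>A * C\<bar>" unfolding A_def C_def by (rule lattice_norm_abs_ge_1)
  moreover have "\<bar>A * C\<bar> \<le> A * A"
    using less pos unfolding A_def C_def by (simp add: abs_mult mult_left_mono)
  ultimately have "1 * 1 \<le> A * A" by simp
  moreover have "0 < A" using pos unfolding A_def .
  ultimately have "1 \<le> A" using mult_strict_mono[of A 1 A 1] by (cases "1 \<le> A") auto
  then obtain k where k: "cf_val w w' k \<le> A" "A < cf_val w w' (Suc k)"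
    using cf_val_conj_bracket[OF irrational gt_1 conj_neg] by blast
  have growth: "1 \<le> cf_val w w' k" "cf_val w w' k < cf_val w w' (Suc k)"
    using cf_val_conj_growth[OF irrational gt_1 conj_neg] by auto
  have "cf_val w w' k = A"
  proof (rule ccontr)
    assume "cf_val w w' k \<noteq> A"
    with k have lt: "cf_val w w' k < A" by simp
    obtain a b where x: "x = a * cf_P w k + b * cf_P w (Suc k)"
      and y: "y = a * cf_Q w k + b * cf_Q w (Suc k)"
      using unimodular_combination[OF cf_P_Q_det] by blast
    have A_comb: "A = of_int a * cf_val w w' k + of_int b * cf_val w w' (Suc k)"
      and C_comb: "C = of_int a * cf_val w w k + of_int b * cf_val w w (Suc k)"
      unfolding A_def C_def x y cf_val_def by (simp_all add: algebra_simps)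
    have "(b = 0 \<and> a > 1) \<or> a * b < 0"
      using coefficients_between_consecutive[OF growth] lt k(2) A_comb by simp
    then have "\<bar>cf_val w w k\<bar> < \<bar>C\<bar>"
      unfolding C_comb by (rule abs_combination_of_alternating_gt[OF cf_val_self_alternates[OF irrational]])
    moreover have "\<bar>cf_val w w' k\<bar> < \<bar>A\<bar>" using lt growth by simp
    moreover have "(cf_P w k, cf_Q w k) \<noteq> (0, 0)" using growth by (auto simp: cf_val_def)
    ultimately show False
      using min unfolding rel_min_def A_def C_def cf_val_def by (elim allE impE) auto
  qed
  then have "of_int (cf_P w k) - of_int (cf_Q w k) * w' = of_int x - of_int y * w'"
    unfolding A_def cf_val_def .
  then have "of_int (cf_P w k - x) - of_int (cf_Q w k - y) * w' = 0"
    by (simp add: algebra_simps)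
  then have "cf_P w k - x = 0 \<and> cf_Q w k - y = 0"
    by (rule of_int_sub_mult_irrational_eq_0_iff[OF conj_irrational, THEN iffD1])
  then show ?thesis by auto
qed

lemma rel_min_eq_pm_cf_val:
  assumes min: "rel_min w w' (of_int x - of_int y * w') (of_int x - of_int y * w)"
    and less: "\<bar>of_int x - of_int y * w\<bar> < \<bar>of_int x - of_int y * w'\<bar>"
  shows "\<exists>k. (of_int x - of_int y * w' = cf_val w w' k \<and> of_int x - of_int y * w = cf_val w w k)
           \<or> (of_int x - of_int y * w' = - cf_val w w' k \<and> of_int x - of_int y * w = - cf_val w w k)"
proof (cases "0 < of_int x - of_int y * w'")
  case True
  then obtain k where "x = cf_P w k" "y = cf_Q w k"
    using rel_min_convergent[OF min] less by auto
  then show ?thesis by (auto simp: cf_val_def)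
next
  case False
  have "of_int (- x) - of_int (- y) * z = - (of_int x - of_int y * z)" for z :: real
    by simp
  then have "rel_min w w' (of_int (- x) - of_int (- y) * w') (of_int (- x) - of_int (- y) * w)"
    using min by (simp only: rel_min_uminus)
  moreover have "0 < of_int (- x) - of_int (- y) * w'" "\<bar>of_int (- x) - of_int (- y) * w\<bar> < of_int (- x) - of_int (- y) * w'"
    using False less by auto
  ultimately obtain k where "- x = cf_P w k" "- y = cf_Q w k"
    using rel_min_convergent by blast
  then have "x = - cf_P w k" "y = - cf_Q w k" by simp_all
  then show ?thesis by (intro exI[of _ k] disjI2) (simp add: cf_val_def)
qed

lemma rel_min_classification:
  assumes min: "rel_min w w' (of_int x - of_int y * w') (of_int x - of_int y * w)"
    and nonzero: "(x, y) \<noteq> (0, 0)"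
  shows "\<exists>k. of_int x - of_int y * w' \<in> {cf_val w w' k, - cf_val w w' k, cf_val w w k, - cf_val w w k}"
proof -
  define A where "A = of_int x - of_int y * w'"
  define C where "C = of_int x - of_int y * w"
  consider "\<bar>C\<bar> < \<bar>A\<bar>" | "\<bar>A\<bar> < \<bar>C\<bar>" | "\<bar>A\<bar> = \<bar>C\<bar>" by linarith
  then show ?thesis
  proof cases
    case 1
    then show ?thesis using rel_min_eq_pm_cf_val[OF min] unfolding A_def C_def by blast
  next
    case 2
    obtain x' y' where C: "of_int x' - of_int y' * w' = C" and A: "of_int x' - of_int y' * w = A"
      using lattice_swap unfolding A_def C_def by metis
    have "rel_min w w' (of_int x' - of_int y' * w') (of_int x' - of_int y' * w)"
      using rel_min_swap[OF min] unfolding A C A_def C_def .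
    then obtain k where "(C = cf_val w w' k \<and> A = cf_val w w k) \<or> (C = - cf_val w w' k \<and> A = - cf_val w w k)"
      using rel_min_eq_pm_cf_val[of x' y'] 2 unfolding A C by blast
    then show ?thesis unfolding A_def by blast
  next
    case 3
    have "\<not> (1 < \<bar>A\<bar> \<and> 1 < \<bar>C\<bar>)"
      using min unfolding rel_min_def A_def C_def by (elim allE[of _ 1] allE[of _ 0]) simp
    moreover have "1 \<le> \<bar>A\<bar> * \<bar>C\<bar>"
      using lattice_norm_abs_ge_1[OF nonzero] unfolding A_def C_def by (simp add: abs_mult)
    then have "\<not> A\<^sup>2 < 1" using 3 by (metis abs_mult_self_eq not_le power2_eq_square)
    then have "\<not> \<bar>A\<bar> < 1" by (simp add: abs_square_less_1)
    ultimately have "\<bar>A\<bar> = 1" "\<bar>C\<bar> = 1" using 3 by auto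
    have "y = 0"
    proof (rule ccontr)
      assume "y \<noteq> 0"
      obtain t where t: "w' = of_int t - w" using conj_eq .
      have "A - C \<in> \<int>" using \<open>\<bar>A\<bar> = 1\<close> \<open>\<bar>C\<bar> = 1\<close> by (auto simp: abs_if split: if_splits)
      then obtain m where "A - C = of_int m" by (rule Ints_cases)
      moreover have "A - C = of_int y * (2 * w - of_int t)" unfolding A_def C_def t by (simp add: algebra_simps)
      ultimately have "w = (of_int m / of_int y + of_int t) / 2" using \<open>y \<noteq> 0\<close> by (simp add: field_simps)
      moreover have "(of_int m / of_int y + of_int t) / 2 \<in> (\<rat> :: real set)" by simp
      ultimately have "w \<in> \<rat>" by (simp only:)
      with irrational show False by contradiction
    qed
    then show ?thesis using \<open>\<bar>A\<bar> = 1\<close> unfolding A_def by (intro exI[of _ 0]) (auto simp: abs_if split: if_splits)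
  qed
qed

end

lemma omega_conj_eq: "omega_conj D = (if D mod 4 = 1 then 1 else 0) - omega D"
  by (simp add: omega_def omega_conj_def field_simps)

lemma omega_irrational:
  assumes "D > 1" "squarefree D"
  shows "omega D \<notin> \<rat>"
proof
  assume omega: "omega D \<in> \<rat>"
  have "sqrt (real_of_int D) = (if D mod 4 = 1 then 2 * omega D - 1 else omega D)"
    by (simp add: omega_def field_simps)
  then have "sqrt (real_of_int D) \<in> \<rat>" using omega by simp
  then show False using sqrt_squarefree_irrational[OF assms] by contradiction
qed

lemma quadratic_conjugates_omega:
  assumes "D > 1" "squarefree D"
  shows "quadratic_conjugates (omega D) (omega_conj D)"
proof
  show "omega D + omega_conj D \<in> \<int>" by (simp add: omega_conj_eq)
  have "real_of_int D * 1 > 1" using assms(1) by simp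
  then have sqrt_gt_1: "sqrt (real_of_int D) > 1" by (simp add: real_less_rsqrt)
  show "omega D * omega_conj D \<in> \<int>"
  proof (cases "D mod 4 = 1")
    case True
    then obtain m where m: "D = 4 * m + 1" by (metis mult.commute div_mult_mod_eq)
    have "omega D * omega_conj D = - of_int m"
      using True assms(1) by (simp add: omega_def omega_conj_def m field_simps power2_eq_square[symmetric])
    then show ?thesis by simp
  next
    case False
    then show ?thesis using assms(1) by (simp add: omega_def omega_conj_def)
  qed
  show "omega D \<notin> \<rat>" using omega_irrational[OF assms] .
  show "omega D > 1" using sqrt_gt_1 by (simp add: omega_def)
  show "omega_conj D < 0" using sqrt_gt_1 by (simp add: omega_conj_def)
qed

lemma OK_eq: "OK D = {of_int u - of_int v * omega_conj D | u v. True}"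
proof -
  define t :: int where "t = (if D mod 4 = 1 then 1 else 0)"
  have t: "omega D = of_int t - omega_conj D" unfolding t_def by (simp add: omega_conj_eq)
  show ?thesis unfolding OK_def
  proof (intro set_eqI iffI)
    fix z assume "z \<in> {of_int a + of_int b * omega D | a b. True}"
    then obtain a b where "z = of_int a + of_int b * omega D" by blast
    then have "z = of_int (a + b * t) - of_int b * omega_conj D" unfolding t by (simp add: algebra_simps)
    then show "z \<in> {of_int u - of_int v * omega_conj D | u v. True}" by blast
  next
    fix z assume "z \<in> {of_int u - of_int v * omega_conj D | u v. True}"
    then obtain u v where "z = of_int u - of_int v * omega_conj D" by blast
    then have "z = of_int (u - v * t) + of_int v * omega D" unfolding t by (simp add: algebra_simps)
    then show "z \<in> {of_int a + of_int b * omega D | a b. True}" by blast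
  qed
qed

lemma galois_conj_lattice:
  assumes "D > 1" "squarefree D"
  shows "galois_conj D (of_int u - of_int v * omega_conj D) = of_int u - of_int v * omega D"
proof -
  define t :: int where "t = (if D mod 4 = 1 then 1 else 0)"
  have t: "omega_conj D = of_int t - omega D" unfolding t_def by (simp add: omega_conj_eq)
  define a where "a = u - v * t"
  have rep: "of_int u - of_int v * omega_conj D = of_int a + of_int v * omega D"
    unfolding a_def t by (simp add: algebra_simps)
  have "galois_conj D (of_int a + of_int v * omega D) = of_int a + of_int v * omega_conj D"
    unfolding galois_conj_def
  proof (rule the_equality)
    fix z
    assume "\<exists>a' b'. of_int a + of_int v * omega D = of_int a' + of_int b' * omega D
      \<and> z = of_int a' + of_int b' * omega_conj D"
    then obtain a' b' where eq: "of_int a + of_int v * omega D = of_int a' + of_int b' * omega D"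
      and z: "z = of_int a' + of_int b' * omega_conj D" by blast
    from eq have "of_int (a - a') - of_int (b' - v) * omega D = 0" by (simp add: algebra_simps)
    then have "a - a' = 0 \<and> b' - v = 0"
      by (rule of_int_sub_mult_irrational_eq_0_iff[OF omega_irrational[OF assms], THEN iffD1])
    then show "z = of_int a + of_int v * omega_conj D" using z by simp
  qed blast
  then show ?thesis unfolding rep by (simp add: a_def t algebra_simps)
qed

lemma totally_positive_lattice:
  assumes "D > 1" "squarefree D"
  shows "totally_positive D (of_int u - of_int v * omega_conj D)
    \<longleftrightarrow> 0 < of_int u - of_int v * omega_conj D \<and> 0 < of_int u - of_int v * omega D"
proof -
  have "of_int u - of_int v * omega_conj D \<in> OK D" unfolding OK_eq by blast
  then show ?thesis unfolding totally_positive_def galois_conj_lattice[OF assms] by simp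
qed

lemma indecomposable_square_rel_min:
  assumes "D > 1" "squarefree D"
    and indec: "indecomposable D ((of_int x - of_int y * omega_conj D)\<^sup>2)"
  shows "rel_min (omega D) (omega_conj D)
    (of_int x - of_int y * omega_conj D) (of_int x - of_int y * omega D)"
  unfolding rel_min_def
proof (intro allI impI notI)
  interpret quadratic_conjugates "omega D" "omega_conj D"
    using quadratic_conjugates_omega[OF assms(1,2)] .
  let ?w = "omega D" and ?w' = "omega_conj D"
  fix u v :: int
  assume "(u, v) \<noteq> (0, 0)"
    and smaller: "\<bar>of_int u - of_int v * ?w'\<bar> < \<bar>of_int x - of_int y * ?w'\<bar>
      \<and> \<bar>of_int u - of_int v * ?w\<bar> < \<bar>of_int x - of_int y * ?w\<bar>"
  obtain X Y where X: "(of_int u - of_int v * ?w')\<^sup>2 = of_int X - of_int Y * ?w'"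
    "(of_int u - of_int v * ?w)\<^sup>2 = of_int X - of_int Y * ?w"
    unfolding power2_eq_square by (rule lattice_mult)
  obtain Xa Ya where Xa: "(of_int x - of_int y * ?w')\<^sup>2 = of_int Xa - of_int Ya * ?w'"
    "(of_int x - of_int y * ?w)\<^sup>2 = of_int Xa - of_int Ya * ?w"
    unfolding power2_eq_square by (rule lattice_mult)
  have "0 < of_int X - of_int Y * ?w'" "0 < of_int X - of_int Y * ?w"
    unfolding X[symmetric] using lattice_nonzero lattice_conj_nonzero \<open>(u, v) \<noteq> (0, 0)\<close> by simp_all
  then have "totally_positive D ((of_int u - of_int v * ?w')\<^sup>2)"
    unfolding X totally_positive_lattice[OF assms(1,2)] by simp
  moreover have "totally_positive D ((of_int x - of_int y * ?w')\<^sup>2 - (of_int u - of_int v * ?w')\<^sup>2)"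
  proof -
    have diff: "(of_int x - of_int y * ?w')\<^sup>2 - (of_int u - of_int v * ?w')\<^sup>2 = of_int (Xa - X) - of_int (Ya - Y) * ?w'"
      "(of_int x - of_int y * ?w)\<^sup>2 - (of_int u - of_int v * ?w)\<^sup>2 = of_int (Xa - X) - of_int (Ya - Y) * ?w"
      unfolding X Xa by (simp_all add: algebra_simps)
    have "(of_int u - of_int v * z)\<^sup>2 < (of_int x - of_int y * z)\<^sup>2"
      if "\<bar>of_int u - of_int v * z\<bar> < \<bar>of_int x - of_int y * z\<bar>" for z :: real
      using that by (meson abs_le_square_iff not_le)
    then have "0 < of_int (Xa - X) - of_int (Ya - Y) * ?w'" "0 < of_int (Xa - X) - of_int (Ya - Y) * ?w"
      unfolding diff[symmetric] using smaller by simp_all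
    then show ?thesis unfolding diff totally_positive_lattice[OF assms(1,2)] by simp
  qed
  ultimately show False using indec unfolding indecomposable_def by force
qed

theorem lemma11:
  fixes D :: int and a :: real
  assumes "D > 1" and "squarefree D"
    and "a \<in> OK D"
    and "indecomposable D (a ^ 2)"
  shows "\<exists>j::int. j \<ge> -1 \<and>
           a \<in> {alpha D j, - alpha D j, galois_conj D (alpha D j), - galois_conj D (alpha D j)}"
proof -
  interpret quadratic_conjugates "omega D" "omega_conj D"
    using quadratic_conjugates_omega[OF assms(1,2)] .
  obtain x y where a: "a = of_int x - of_int y * omega_conj D"
    using assms(3) unfolding OK_eq by blast
  have "a \<noteq> 0" using assms(4) by (auto simp: indecomposable_def totally_positive_def)
  then have "(x, y) \<noteq> (0, 0)" using a by auto
  moreover have "rel_min (omega D) (omega_conj D) a (of_int x - of_int y * omega D)"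
    using indecomposable_square_rel_min[OF assms(1,2)] assms(4) unfolding a .
  ultimately obtain k where k: "a \<in> {cf_val (omega D) (omega_conj D) k, - cf_val (omega D) (omega_conj D) k,
      cf_val (omega D) (omega D) k, - cf_val (omega D) (omega D) k}"
    using rel_min_classification unfolding a by blast
  have "alpha D (int k - 1) = cf_val (omega D) (omega_conj D) k"
    by (simp add: alpha_def p_def q_def cf_val_def)
  moreover have "galois_conj D (cf_val (omega D) (omega_conj D) k) = cf_val (omega D) (omega D) k"
    unfolding cf_val_def by (rule galois_conj_lattice[OF assms(1,2)])
  ultimately show ?thesis using k by (intro exI[of _ "int k - 1"]) auto
qed

end
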